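(* Let $\sigma>0$, $\alpha>0$, and let $X, Y$ be independent random variables each with the generalized normal distribution $GND(0,\sigma,\alpha)$, i.e. with density $p(x) = \frac{\alpha\Lambda}{2\Gamma(1/\alpha)} e^{-\Lambda^\alpha |x|^\alpha}$, where $\Lambda = \frac{1}{\sigma}\sqrt{\Gamma(3/\alpha)/\Gamma(1/\alpha)}$. Then $Z = XY$ has density $$f_Z(z) = \frac{\alpha \Lambda^2}{\Gamma(1/\alpha)^2}\, K_0\!\left(2\Lambda^\alpha |z|^{\alpha/2}\right), \qquad z \neq 0.$$
   Context: $K_0$ is the modified Bessel function of the second kind of order $0$; $\Gamma$ is the Euler Gamma function. The distribution of $Z$ is called PGND$(\alpha,\sigma)$. *)

theory Defs
  imports "HOL-Probability.Probability"
begin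

text \<open>Modified Bessel function of the second kind of order 0, via its standard
integral representation  K_0(x) = \<integral>_0^\<infinity> exp(-x cosh t) dt  (x > 0).\<close>
definition bessel_K0 :: "real \<Rightarrow> real" where
  "bessel_K0 x = (LBINT t:{0<..}. exp (- x * cosh t))"

definition gnd_Lambda :: "real \<Rightarrow> real \<Rightarrow> real" where
  "gnd_Lambda \<sigma> \<alpha> = (1 / \<sigma>) * sqrt (Gamma (3 / \<alpha>) / Gamma (1 / \<alpha>))"

definition gnd_density :: "real \<Rightarrow> real \<Rightarrow> real \<Rightarrow> real" where
  "gnd_density \<sigma> \<alpha> x =
     \<alpha> * gnd_Lambda \<sigma> \<alpha> / (2 * Gamma (1 / \<alpha>)) *
     exp (- (gnd_Lambda \<sigma> \<alpha> powr \<alpha>) * \<bar>x\<bar> powr \<alpha>)"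

text \<open>Density of the product Z = XY (PGND(alpha, sigma)); the value at 0 is irrelevant
  (null set) and fixed to 0.\<close>
definition pgnd_density :: "real \<Rightarrow> real \<Rightarrow> real \<Rightarrow> real" where
  "pgnd_density \<sigma> \<alpha> z =
     (if z = 0 then 0 else
      \<alpha> * (gnd_Lambda \<sigma> \<alpha>)\<^sup>2 / (Gamma (1 / \<alpha>))\<^sup>2 *
      bessel_K0 (2 * gnd_Lambda \<sigma> \<alpha> powr \<alpha> * \<bar>z\<bar> powr (\<alpha> / 2)))"

end

(* The density of XY is the multiplicative convolution z |-> int p(z/y) p(y) dy/|y|.
   Its integrand is even in y, and on y > 0 the substitution y = sqrt|z| e^(u/alpha) turns
   dy/y into du/alpha and the exponent Lambda^alpha (|z/y|^alpha + y^alpha) into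
   2 Lambda^alpha |z|^(alpha/2) cosh u; what remains is the integral representation of K_0. *)
theory Submission
  imports Defs
begin

lemma nn_integral_lborel_scale:
  fixes h :: "real \<Rightarrow> ennreal" and c :: real
  assumes "h \<in> borel_measurable borel" "c \<noteq> 0"
  shows "(\<integral>\<^sup>+x. h (x * c) \<partial>lborel) = ennreal (1 / \<bar>c\<bar>) * (\<integral>\<^sup>+x. h x \<partial>lborel)"
  using nn_integral_real_affine[of "\<lambda>x. h (x * c)" "1 / c" 0] assms by (simp add: mult.commute)

lemma distr_mult_pair_density:
  fixes f g :: "real \<Rightarrow> ennreal"
  assumes [measurable]: "f \<in> borel_measurable borel" "g \<in> borel_measurable borel"
    and "sigma_finite_measure (density lborel g)"
  shows "distr (density lborel f \<Otimes>\<^sub>M density lborel g) borel (\<lambda>(x, y). x * y) =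
    density lborel (\<lambda>z. \<integral>\<^sup>+y. f (z / y) * g y * ennreal (1 / \<bar>y\<bar>) \<partial>lborel)"
    (is "?l = ?r")
proof (intro measure_eqI)
  fix A assume "A \<in> sets ?l"
  then have [measurable]: "A \<in> sets borel"
    by simp
  have scale: "(\<integral>\<^sup>+x. f x * g y * indicator A (x * y) \<partial>lborel) =
      (\<integral>\<^sup>+z. f (z / y) * g y * ennreal (1 / \<bar>y\<bar>) * indicator A z \<partial>lborel)" if "y \<noteq> 0" for y
    using nn_integral_lborel_scale[of "\<lambda>z. f (z / y) * g y * indicator A z" y] that
    by (simp add: ac_simps flip: nn_integral_cmult)
  have "emeasure ?l A = (\<integral>\<^sup>+z. indicator A z \<partial>?l)"
    by simp
  also have "\<dots> = (\<integral>\<^sup>+p. indicator A (fst p * snd p) \<partial>(density lborel f \<Otimes>\<^sub>M density lborel g))"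
    by (subst nn_integral_distr) (auto simp: split_beta')
  also have "\<dots> = (\<integral>\<^sup>+p. indicator A (fst p * snd p) \<partial>density (lborel \<Otimes>\<^sub>M lborel) (\<lambda>(x, y). f x * g y))"
    using assms(3) by (subst pair_measure_density) (auto intro: lborel.sigma_finite_measure_axioms)
  also have "\<dots> = (\<integral>\<^sup>+y. (\<integral>\<^sup>+x. f x * g y * indicator A (x * y) \<partial>lborel) \<partial>lborel)"
    by (subst nn_integral_density) (auto simp: case_prod_beta lborel_pair.nn_integral_snd[symmetric])
  also have "\<dots> = (\<integral>\<^sup>+y. (\<integral>\<^sup>+z. f (z / y) * g y * ennreal (1 / \<bar>y\<bar>) * indicator A z \<partial>lborel) \<partial>lborel)"
    using scale by (intro nn_integral_cong_AE AE_I[where N="{0}"]) auto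
  also have "\<dots> = (\<integral>\<^sup>+z. (\<integral>\<^sup>+y. f (z / y) * g y * ennreal (1 / \<bar>y\<bar>) * indicator A z \<partial>lborel) \<partial>lborel)"
    by (intro lborel_pair.Fubini') simp
  also have "\<dots> = emeasure ?r A"
    by (auto simp: emeasure_density nn_integral_multc intro!: nn_integral_cong)
  finally show "emeasure ?l A = emeasure ?r A" .
qed simp

lemma (in prob_space) distributed_mult:
  fixes f g :: "real \<Rightarrow> ennreal"
  assumes indep: "indep_var borel X borel Y"
    and X: "distributed M lborel X f" and Y: "distributed M lborel Y g"
  shows "distributed M lborel (\<lambda>\<omega>. X \<omega> * Y \<omega>)
    (\<lambda>z. \<integral>\<^sup>+y. f (z / y) * g y * ennreal (1 / \<bar>y\<bar>) \<partial>lborel)"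
  unfolding distributed_def
proof safe
  have [measurable]: "f \<in> borel_measurable borel" "g \<in> borel_measurable borel"
    using distributed_borel_measurable[OF X] distributed_borel_measurable[OF Y] by simp_all
  show "(\<lambda>z. \<integral>\<^sup>+y. f (z / y) * g y * ennreal (1 / \<bar>y\<bar>) \<partial>lborel) \<in> borel_measurable lborel"
    by measurable
  have [measurable]: "random_variable borel X" "random_variable borel Y"
    using distributed_measurable[OF X] distributed_measurable[OF Y] by auto
  then show "random_variable lborel (\<lambda>\<omega>. X \<omega> * Y \<omega>)"
    by simp
  have "distr M borel (\<lambda>\<omega>. X \<omega> * Y \<omega>) = distr (distr M borel X \<Otimes>\<^sub>M distr M borel Y) borel (\<lambda>(x, y). x * y)"
    using indep unfolding indep_var_distribution_eq
    by (auto simp: distr_distr o_def intro!: arg_cong[where f = "distr M borel"])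
  also have "\<dots> = distr (density lborel f \<Otimes>\<^sub>M density lborel g) borel (\<lambda>(x, y). x * y)"
    using distributed_distr_eq_density[OF X] distributed_distr_eq_density[OF Y]
    by (simp cong: distr_cong)
  also have "\<dots> = density lborel (\<lambda>z. \<integral>\<^sup>+y. f (z / y) * g y * ennreal (1 / \<bar>y\<bar>) \<partial>lborel)"
    using distributed_finite_measure_density[OF Y]
    by (intro distr_mult_pair_density) (auto intro: finite_measure.sigma_finite_measure)
  finally show "distr M lborel (\<lambda>\<omega>. X \<omega> * Y \<omega>) =
      density lborel (\<lambda>z. \<integral>\<^sup>+y. f (z / y) * g y * ennreal (1 / \<bar>y\<bar>) \<partial>lborel)"
    by (simp cong: distr_cong)
qed

lemma nn_integral_even:
  fixes h :: "real \<Rightarrow> ennreal"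
  assumes [measurable]: "h \<in> borel_measurable borel" and even: "\<And>x. h (- x) = h x"
  shows "(\<integral>\<^sup>+x. h x \<partial>lborel) = 2 * (\<integral>\<^sup>+x. h x * indicator {0<..} x \<partial>lborel)"
proof -
  have "(\<integral>\<^sup>+x. h x \<partial>lborel) = (\<integral>\<^sup>+x. h x * indicator {0<..} x + h x * indicator {..<0} x \<partial>lborel)"
    by (intro nn_integral_cong_AE AE_I[where N="{0}"]) (auto split: split_indicator)
  also have "\<dots> = (\<integral>\<^sup>+x. h x * indicator {0<..} x \<partial>lborel) + (\<integral>\<^sup>+x. h x * indicator {..<0} x \<partial>lborel)"
    by (intro nn_integral_add) auto
  also have "(\<integral>\<^sup>+x. h x * indicator {..<0} x \<partial>lborel) =
      ennreal \<bar>-1\<bar> * (\<integral>\<^sup>+x. h (0 + (-1) * x) * indicator {..<0} (0 + (-1) * x) \<partial>lborel)"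
    by (intro nn_integral_real_affine) auto
  also have "\<dots> = (\<integral>\<^sup>+x. h x * indicator {0<..} x \<partial>lborel)"
    by (auto simp: even intro!: nn_integral_cong split: split_indicator)
  finally show ?thesis
    by (simp add: mult_2)
qed

lemma Union_Icc_exp_eq_Ioi:
  fixes s \<alpha> :: real
  assumes "s > 0" "\<alpha> > 0"
  shows "(\<Union>n. {s * exp (- real (Suc n) / \<alpha>)..s * exp (real (Suc n) / \<alpha>)}) = {0<..}"
proof (intro equalityI subsetI)
  fix y assume "y \<in> (\<Union>n. {s * exp (- real (Suc n) / \<alpha>)..s * exp (real (Suc n) / \<alpha>)})"
  then show "y \<in> {0<..}"
    using assms by (auto intro: less_le_trans[of 0 "s * exp _"])
next
  fix y :: real assume "y \<in> {0<..}"
  define u where "u = ln (y / s)"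
  obtain n where "\<bar>\<alpha> * u\<bar> \<le> real n"
    using real_arch_simple by blast
  then have "- real (Suc n) / \<alpha> \<le> u" "u \<le> real (Suc n) / \<alpha>"
    using assms by (auto simp: field_simps abs_le_iff)
  moreover have "y = s * exp u"
    using \<open>y \<in> {0<..}\<close> assms by (simp add: u_def)
  ultimately have "y \<in> {s * exp (- real (Suc n) / \<alpha>)..s * exp (real (Suc n) / \<alpha>)}"
    using assms by auto
  then show "y \<in> (\<Union>n. {s * exp (- real (Suc n) / \<alpha>)..s * exp (real (Suc n) / \<alpha>)})"
    by blast
qed

lemma nn_integral_Ioi_exp_substitution:
  fixes h :: "real \<Rightarrow> ennreal" and s \<alpha> :: real
  assumes [measurable]: "h \<in> borel_measurable borel" and "s > 0" "\<alpha> > 0"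
  shows "(\<integral>\<^sup>+y. h y * indicator {0<..} y \<partial>lborel) =
         (\<integral>\<^sup>+u. h (s * exp (u / \<alpha>)) * ennreal (s * exp (u / \<alpha>) / \<alpha>) \<partial>lborel)"
proof -
  define g where "g u = s * exp (u / \<alpha>)" for u
  define g' where "g' u = s * exp (u / \<alpha>) / \<alpha>" for u
  \<comment> \<open>Suc n: nn_integral_substitution_aux needs nondegenerate intervals.\<close>
  define J where "J n = {- real (Suc n)..real (Suc n)}" for n
  have [measurable]: "g \<in> borel_measurable borel" "g' \<in> borel_measurable borel"
    unfolding g_def g'_def by measurable
  have g_deriv: "(g has_real_derivative g' u) (at u)" for u
    using assms unfolding g_def g'_def by (auto intro!: derivative_eq_intros)
  have g'_cont: "continuous_on A g'" for A
    using assms unfolding g'_def by (intro continuous_intros) auto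
  have incseq_g_J: "incseq (\<lambda>n. {g (- real (Suc n))..g (real (Suc n))})"
    using assms by (intro incseq_SucI) (auto simp: g_def divide_right_mono)
  have incseq_J: "incseq J"
    by (intro incseq_SucI) (auto simp: J_def)
  have Ioi_eq: "{0<..} = (\<Union>n. {g (- real (Suc n))..g (real (Suc n))})"
    using Union_Icc_exp_eq_Ioi[OF assms(2,3)] by (simp add: g_def)
  have UNIV_eq: "UNIV = (\<Union>n. J n)"
  proof -
    have "u \<in> J (nat \<lceil>\<bar>u\<bar>\<rceil>)" for u
      unfolding J_def by (auto simp: abs_le_iff; linarith)
    then show ?thesis
      by blast
  qed
  have "(\<integral>\<^sup>+y. h y * indicator {0<..} y \<partial>lborel) = emeasure (density lborel h) {0<..}"
    by (simp add: emeasure_density)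
  also have "\<dots> = (SUP n. emeasure (density lborel h) {g (- real (Suc n))..g (real (Suc n))})"
    unfolding Ioi_eq by (intro SUP_emeasure_incseq[symmetric] incseq_g_J) auto
  also have "\<dots> = (SUP n. emeasure (density lborel (\<lambda>u. h (g u) * ennreal (g' u))) (J n))"
  proof -
    have "(\<integral>\<^sup>+y. h y * indicator {g (- real (Suc n))..g (real (Suc n))} y \<partial>lborel) =
          (\<integral>\<^sup>+u. h (g u) * ennreal (g' u) * indicator (J n) u \<partial>lborel)" for n
      using assms(2,3) g_deriv g'_cont unfolding J_def
      by (intro nn_integral_substitution_aux) (auto simp: g'_def)
    then show ?thesis
      by (simp add: emeasure_density J_def)
  qed
  also have "\<dots> = emeasure (density lborel (\<lambda>u. h (g u) * ennreal (g' u))) UNIV"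
    unfolding UNIV_eq by (intro SUP_emeasure_incseq incseq_J) (auto simp: J_def)
  also have "\<dots> = (\<integral>\<^sup>+u. h (g u) * ennreal (g' u) \<partial>lborel)"
    by (simp add: emeasure_density)
  finally show ?thesis
    by (simp add: g_def g'_def)
qed

lemma le_cosh_real: "0 \<le> t \<Longrightarrow> t \<le> cosh (t :: real)"
  using real_le_x_sinh[of t] sinh_le_cosh_real[of t] unfolding sinh_def by (simp add: exp_minus)

lemma borel_measurable_cosh [measurable]:
  "h \<in> borel_measurable M \<Longrightarrow> (\<lambda>x. cosh (h x :: real)) \<in> borel_measurable M"
  by (intro borel_measurable_continuous_on[where f = cosh] continuous_intros)

lemma bessel_K0_measurable [measurable]: "bessel_K0 \<in> borel_measurable borel"
  unfolding bessel_K0_def set_lebesgue_integral_def by measurable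

lemma bessel_K0_nonneg: "bessel_K0 x \<ge> 0"
  unfolding bessel_K0_def set_lebesgue_integral_def by (intro integral_nonneg_AE) auto

lemma bessel_K0_eq_nn_integral:
  fixes c :: real
  assumes "c > 0"
  shows "ennreal (bessel_K0 c) = (\<integral>\<^sup>+t. ennreal (exp (- c * cosh t)) * indicator {0<..} t \<partial>lborel)"
proof -
  let ?I = "\<integral>\<^sup>+t. ennreal (exp (- c * cosh t)) * indicator {0<..} t \<partial>lborel"
  have "exp (- c * cosh t) \<le> exponential_density c t / c" if "t > 0" for t
    using le_cosh_real[of t] that assms by (simp add: exponential_density_def)
  then have "?I \<le> (\<integral>\<^sup>+t. ennreal (1 / c) * ennreal (exponential_density c t) \<partial>lborel)"
    using assms
    by (intro nn_integral_mono)
       (auto simp: ennreal_mult[symmetric] exponential_density_nonneg intro!: ennreal_leI split: split_indicator)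
  also have "\<dots> = ennreal (1 / c)"
    using prob_space.emeasure_space_1[OF prob_space_exponential_density[OF assms]]
    by (simp add: nn_integral_cmult emeasure_density)
  finally have "?I < \<top>"
    using ennreal_less_top[of "1 / c"] by (rule le_less_trans)
  have "bessel_K0 c = enn2real (\<integral>\<^sup>+t. ennreal (indicator {0<..} t *\<^sub>R exp (- c * cosh t)) \<partial>lborel)"
    unfolding bessel_K0_def set_lebesgue_integral_def by (rule integral_eq_nn_integral) auto
  also have "(\<integral>\<^sup>+t. ennreal (indicator {0<..} t *\<^sub>R exp (- c * cosh t)) \<partial>lborel) = ?I"
    by (intro nn_integral_cong) (auto split: split_indicator)
  finally show ?thesis
    using \<open>?I < \<top>\<close> by simp
qed

lemma nn_integral_exp_neg_cosh:
  fixes c :: real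
  assumes "c > 0"
  shows "(\<integral>\<^sup>+t. ennreal (exp (- c * cosh t)) \<partial>lborel) = ennreal (2 * bessel_K0 c)"
  using bessel_K0_eq_nn_integral[OF assms] bessel_K0_nonneg[of c]
  by (subst nn_integral_even) (auto simp: ennreal_mult)

lemma powr_quotient_add_powr_eq_cosh:
  fixes a \<alpha> u :: real
  assumes "a > 0" "\<alpha> > 0"
  shows "(a / (sqrt a * exp (u / \<alpha>))) powr \<alpha> + (sqrt a * exp (u / \<alpha>)) powr \<alpha> =
    2 * a powr (\<alpha> / 2) * cosh u"
proof -
  have exp_powr: "exp v powr \<alpha> = exp (\<alpha> * v)" for v
    by (simp add: powr_def)
  have sqrt_powr: "sqrt a powr \<alpha> = a powr (\<alpha> / 2)"
    using assms by (simp add: powr_half_sqrt[symmetric] powr_powr)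
  have "a / (sqrt a * exp (u / \<alpha>)) = sqrt a * exp (- u / \<alpha>)"
    using assms by (simp add: exp_minus field_simps flip: real_sqrt_mult)
  then show ?thesis
    using assms by (simp add: powr_mult exp_powr sqrt_powr cosh_def algebra_simps)
qed

lemma gnd_Lambda_pos: "\<sigma> > 0 \<Longrightarrow> \<alpha> > 0 \<Longrightarrow> gnd_Lambda \<sigma> \<alpha> > 0"
  unfolding gnd_Lambda_def by (auto intro!: divide_pos_pos Gamma_real_pos)

lemma gnd_density_measurable [measurable]: "gnd_density \<sigma> \<alpha> \<in> borel_measurable borel"
  unfolding gnd_density_def by measurable

lemma pgnd_density_measurable [measurable]: "pgnd_density \<sigma> \<alpha> \<in> borel_measurable borel"
  unfolding pgnd_density_def by measurable

lemma nn_integral_gnd_density_product: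
  fixes \<sigma> \<alpha> z :: real
  assumes "\<sigma> > 0" "\<alpha> > 0" "z \<noteq> 0"
  shows "(\<integral>\<^sup>+y. ennreal (gnd_density \<sigma> \<alpha> (z / y)) * ennreal (gnd_density \<sigma> \<alpha> y) * ennreal (1 / \<bar>y\<bar>) \<partial>lborel) =
    ennreal (pgnd_density \<sigma> \<alpha> z)"
proof -
  define L where "L = gnd_Lambda \<sigma> \<alpha>"
  define C where "C = \<alpha> * L / (2 * Gamma (1 / \<alpha>))"
  define c where "c = 2 * L powr \<alpha> * \<bar>z\<bar> powr (\<alpha> / 2)"
  define A where "A = C\<^sup>2 / \<alpha>"
  define H where "H y = ennreal (gnd_density \<sigma> \<alpha> (z / y)) * ennreal (gnd_density \<sigma> \<alpha> y) * ennreal (1 / \<bar>y\<bar>)" for y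
  have "L > 0"
    using assms by (simp add: L_def gnd_Lambda_pos)
  have "Gamma (1 / \<alpha>) > 0"
    using assms by (simp add: Gamma_real_pos)
  have "c > 0"
    using \<open>L > 0\<close> assms by (simp add: c_def)
  have p_eq: "gnd_density \<sigma> \<alpha> x = C * exp (- (L powr \<alpha>) * \<bar>x\<bar> powr \<alpha>)" for x
    by (simp add: gnd_density_def L_def C_def)
  have [measurable]: "H \<in> borel_measurable borel"
    unfolding H_def by measurable
  have "C \<ge> 0" "A \<ge> 0"
    using \<open>L > 0\<close> \<open>Gamma (1 / \<alpha>) > 0\<close> assms by (simp_all add: C_def A_def)
  have H_subst: "H (sqrt \<bar>z\<bar> * exp (u / \<alpha>)) * ennreal (sqrt \<bar>z\<bar> * exp (u / \<alpha>) / \<alpha>) =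
      ennreal A * ennreal (exp (- c * cosh u))" for u
  proof -
    define y where "y = sqrt \<bar>z\<bar> * exp (u / \<alpha>)"
    have "y > 0"
      using assms by (simp add: y_def)
    have "gnd_density \<sigma> \<alpha> (z / y) * gnd_density \<sigma> \<alpha> y * (1 / y) * (y / \<alpha>) =
        A * exp (- (L powr \<alpha>) * ((\<bar>z\<bar> / y) powr \<alpha> + y powr \<alpha>))"
      using \<open>y > 0\<close> by (simp add: A_def p_eq abs_divide power2_eq_square algebra_simps flip: exp_add)
    also have "\<dots> = A * exp (- c * cosh u)"
      using powr_quotient_add_powr_eq_cosh[of "\<bar>z\<bar>" \<alpha> u] assms by (simp add: y_def c_def)
    finally show ?thesis
      using \<open>y > 0\<close> \<open>C \<ge> 0\<close> assms
      by (simp add: H_def p_eq A_def flip: y_def ennreal_mult)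
  qed
  have "(\<integral>\<^sup>+y. H y \<partial>lborel) = 2 * (\<integral>\<^sup>+y. H y * indicator {0<..} y \<partial>lborel)"
    by (rule nn_integral_even) (simp_all add: H_def p_eq)
  also have "\<dots> = 2 * (\<integral>\<^sup>+u. ennreal A * ennreal (exp (- c * cosh u)) \<partial>lborel)"
    using assms by (simp add: nn_integral_Ioi_exp_substitution[of H "sqrt \<bar>z\<bar>" \<alpha>] H_subst)
  also have "\<dots> = 2 * (ennreal A * ennreal (2 * bessel_K0 c))"
    using nn_integral_exp_neg_cosh[OF \<open>c > 0\<close>] by (simp add: nn_integral_cmult)
  also have "\<dots> = ennreal (4 * A * bessel_K0 c)"
    using bessel_K0_nonneg[of c] \<open>A \<ge> 0\<close> by (simp add: ennreal_mult' ennreal_mult mult_ac)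
  also have "4 * A * bessel_K0 c = pgnd_density \<sigma> \<alpha> z"
    using assms \<open>Gamma (1 / \<alpha>) > 0\<close>
    by (simp add: pgnd_density_def A_def C_def c_def L_def power2_eq_square field_simps)
  finally show ?thesis
    by (simp add: H_def)
qed

theorem theorem5:
  fixes M :: "'a measure" and X Y :: "'a \<Rightarrow> real" and \<sigma> \<alpha> :: real
  assumes "prob_space M"
    and "\<sigma> > 0" and "\<alpha> > 0"
    and "prob_space.indep_var M borel X borel Y"
    and "distributed M lborel X (\<lambda>x. ennreal (gnd_density \<sigma> \<alpha> x))"
    and "distributed M lborel Y (\<lambda>x. ennreal (gnd_density \<sigma> \<alpha> x))"
  shows "distributed M lborel (\<lambda>\<omega>. X \<omega> * Y \<omega>) (\<lambda>z. ennreal (pgnd_density \<sigma> \<alpha> z))"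
proof -
  interpret prob_space M by fact
  have "distributed M lborel (\<lambda>\<omega>. X \<omega> * Y \<omega>) (\<lambda>z. \<integral>\<^sup>+y.
      ennreal (gnd_density \<sigma> \<alpha> (z / y)) * ennreal (gnd_density \<sigma> \<alpha> y) * ennreal (1 / \<bar>y\<bar>) \<partial>lborel)"
    using assms(4-6) by (rule distributed_mult)
  moreover have "AE z in lborel. (\<integral>\<^sup>+y. ennreal (gnd_density \<sigma> \<alpha> (z / y)) * ennreal (gnd_density \<sigma> \<alpha> y) *
      ennreal (1 / \<bar>y\<bar>) \<partial>lborel) = ennreal (pgnd_density \<sigma> \<alpha> z)"
    using assms(2,3) by (intro AE_I[where N="{0}"]) (auto intro: nn_integral_gnd_density_product)
  ultimately show ?thesis
    by (subst (asm) distributed_cong_density) auto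
qed

end
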